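(* Let $G$ be a graph with $4\le |V(G)|\le 5$ and $E(G)\ne\emptyset$. Then $\varphi_r(G-v)=\varphi_r(G)+\lfloor |V(G)|/2\rfloor-2$ for every vertex $v\in V(G)$ if and only if $G$ contains two edges with no common endpoint but contains no induced subgraph that is a minimal b-$3$-atom.
   Context: A proper $k$-coloring of $G$ is a surjective map $c:V(G)\to\{1,\ldots,k\}$ with $c(u)\ne c(v)$ for every edge $uv$. In a proper $k$-coloring, a vertex of color $i$ is a b-vertex if it has a neighbor of every color $j\ne i$. A b-$k$-coloring is a proper $k$-coloring in which every color class contains a b-vertex; $\varphi(G)$ is the largest $k$ such that $G$ has a b-$k$-coloring, and $\varphi_r(G)=\max\{\varphi(H): H\text{ an induced subgraph of }G\}$. A b-$t$-atom is a graph $A$ whose vertex set can be partitioned into $t$ sets $D_1,\ldots,D_t$, each $D_i$ containing a special vertex $c_i$, such that each $D_i$ is independent with $|D_i|\le t$ and, for all $i\ne j$, $c_i$ has a neighbor in $D_j$; it is minimal if no proper induced subgraph of it is a b-$t$-atom. *)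

theory Defs
  imports Main
begin

text \<open>An induced subgraph on S \<subseteq> V
 is represented by the pair (S, E); all notions below only inspect E on
 pairs of vertices of the given vertex set.\<close>

definition graph :: "'a set \<Rightarrow> ('a \<Rightarrow> 'a \<Rightarrow> bool) \<Rightarrow> bool" where
  "graph V E \<longleftrightarrow> finite V \<and> (\<forall>u v. E u v \<longrightarrow> E v u) \<and> (\<forall>v. \<not> E v v)
     \<and> (\<forall>u v. E u v \<longrightarrow> u \<in> V \<and> v \<in> V)"

definition proper_coloring :: "'a set \<Rightarrow> ('a \<Rightarrow> 'a \<Rightarrow> bool) \<Rightarrow> ('a \<Rightarrow> nat) \<Rightarrow> nat \<Rightarrow> bool" where
  "proper_coloring V E c k \<longleftrightarrow> c ` V = {1..k}
     \<and> (\<forall>u\<in>V. \<forall>v\<in>V. E u v \<longrightarrow> c u \<noteq> c v)"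

definition b_vertex :: "'a set \<Rightarrow> ('a \<Rightarrow> 'a \<Rightarrow> bool) \<Rightarrow> ('a \<Rightarrow> nat) \<Rightarrow> nat \<Rightarrow> 'a \<Rightarrow> bool" where
  "b_vertex V E c k v \<longleftrightarrow> v \<in> V
     \<and> (\<forall>j\<in>{1..k}. j \<noteq> c v \<longrightarrow> (\<exists>u\<in>V. E v u \<and> c u = j))"

definition b_coloring :: "'a set \<Rightarrow> ('a \<Rightarrow> 'a \<Rightarrow> bool) \<Rightarrow> ('a \<Rightarrow> nat) \<Rightarrow> nat \<Rightarrow> bool" where
  "b_coloring V E c k \<longleftrightarrow> proper_coloring V E c k
     \<and> (\<forall>i\<in>{1..k}. \<exists>v\<in>V. c v = i \<and> b_vertex V E c k v)"

definition b_chromatic :: "'a set \<Rightarrow> ('a \<Rightarrow> 'a \<Rightarrow> bool) \<Rightarrow> nat" where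
  "b_chromatic V E = Max {k. \<exists>c. b_coloring V E c k}"

definition b_chromatic_r :: "'a set \<Rightarrow> ('a \<Rightarrow> 'a \<Rightarrow> bool) \<Rightarrow> nat" where
  "b_chromatic_r V E = Max {b_chromatic S E | S. S \<subseteq> V}"

definition independent :: "('a \<Rightarrow> 'a \<Rightarrow> bool) \<Rightarrow> 'a set \<Rightarrow> bool" where
  "independent E D \<longleftrightarrow> (\<forall>u\<in>D. \<forall>v\<in>D. \<not> E u v)"

definition b_atom :: "'a set \<Rightarrow> ('a \<Rightarrow> 'a \<Rightarrow> bool) \<Rightarrow> nat \<Rightarrow> bool" where
  "b_atom V E t \<longleftrightarrow> (\<exists>D :: nat \<Rightarrow> 'a set. \<exists>c :: nat \<Rightarrow> 'a.
      (\<Union>i\<in>{1..t}. D i) = V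
    \<and> (\<forall>i\<in>{1..t}. \<forall>j\<in>{1..t}. i \<noteq> j \<longrightarrow> D i \<inter> D j = {})
    \<and> (\<forall>i\<in>{1..t}. c i \<in> D i \<and> independent E (D i) \<and> card (D i) \<le> t)
    \<and> (\<forall>i\<in>{1..t}. \<forall>j\<in>{1..t}. i \<noteq> j \<longrightarrow> (\<exists>u\<in>D j. E (c i) u)))"

definition minimal_b_atom :: "'a set \<Rightarrow> ('a \<Rightarrow> 'a \<Rightarrow> bool) \<Rightarrow> nat \<Rightarrow> bool" where
  "minimal_b_atom V E t \<longleftrightarrow> b_atom V E t \<and> (\<forall>S. S \<subset> V \<longrightarrow> \<not> b_atom S E t)"

end

theory Submission
  imports Defs
begin

text \<open>Here card V div 2 - 2 = 0, so the left-hand side says that deleting a vertex never lowers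
  \<phi>_r, the largest k such that some induced subgraph has a b-k-colouring. On at most five
  vertices a b-3-colouring is the same thing as a b-3-atom, so the absence of an induced minimal
  b-3-atom says \<phi>_r \<le> 2.

  If \<phi>_r = m \<ge> 3, a b-m-colouring of a vertex-deleted subgraph uses at most m + 1 vertices,
  so its b-vertices form a clique K_m. If this happened for every deleted vertex, the graph would
  contain K_(m+1) (for m = 3 on five vertices by a small case analysis), which is b-colourable
  with m + 1 colours, contradicting maximality. If \<phi>_r = 2, the graph is triangle-free, a
  b-2-colouring is just an edge, and every vertex is avoided by some edge exactly when there are
  two disjoint edges.\<close>

lemma graphD:
  assumes "graph V E"
  shows "finite V" and "symp E" and "irreflp E" and "E u v \<Longrightarrow> u \<in> V \<and> v \<in> V"
  using assms unfolding graph_def by (auto intro: sympI irreflpI)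

section \<open>Cliques\<close>

definition clique :: "('a \<Rightarrow> 'a \<Rightarrow> bool) \<Rightarrow> 'a set \<Rightarrow> bool" where
  "clique E Q \<longleftrightarrow> (\<forall>x\<in>Q. \<forall>y\<in>Q. x \<noteq> y \<longrightarrow> E x y)"

lemma clique_subset: "clique E Q \<Longrightarrow> Q' \<subseteq> Q \<Longrightarrow> clique E Q'"
  unfolding clique_def by blast

lemma clique_empty [simp]: "clique E {}"
  unfolding clique_def by simp

lemma clique_insert:
  assumes "symp E"
  shows "clique E (insert x Q) \<longleftrightarrow> clique E Q \<and> (\<forall>y\<in>Q. x \<noteq> y \<longrightarrow> E x y)"
  using sympD[OF assms] unfolding clique_def by auto

lemma clique_of_vertex_deletions:
  assumes "finite V" and "3 \<le> card V" and "\<forall>v\<in>V. clique E (V - {v})"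
  shows "clique E V"
  unfolding clique_def
proof (intro ballI impI)
  fix x y assume "x \<in> V" "y \<in> V" "x \<noteq> y"
  then have "card (V - {x, y}) \<noteq> 0"
    using assms(1,2) by (simp add: card_Diff_subset)
  then obtain v where "v \<in> V" "v \<noteq> x" "v \<noteq> y"
    by (metis DiffE card.empty ex_in_conv insert_iff)
  with \<open>x \<in> V\<close> \<open>y \<in> V\<close> \<open>x \<noteq> y\<close> assms(3) show "E x y"
    unfolding clique_def by auto
qed

lemma clique_triple_in_four:
  assumes "T \<subseteq> {p, q, r, s}" and "card T = 3" and "clique E T"
  shows "clique E {p, q, r} \<or> clique E {p, q, s} \<or> clique E {p, r, s} \<or> clique E {q, r, s}"
proof -
  have triple: "T = {x, y, z}" if "T \<subseteq> {x, y, z}" for x y z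
  proof (rule card_subset_eq[OF _ that])
    have "card {x, y, z} \<le> 3"
      by (auto simp: card_insert_if)
    then show "card T = card {x, y, z}"
      using card_mono[OF _ that] assms(2) by simp
  qed simp
  show ?thesis
  proof (cases "{p, q, r} \<subseteq> T")
    case True
    then show ?thesis using assms(3) clique_subset by blast
  next
    case False
    then consider "p \<notin> T" | "q \<notin> T" | "r \<notin> T" by blast
    then show ?thesis
    proof cases
      case 1
      then have "T = {q, r, s}" using assms(1) by (intro triple) auto
      then show ?thesis using assms(3) by simp
    next
      case 2
      then have "T = {p, r, s}" using assms(1) by (intro triple) auto
      then show ?thesis using assms(3) by simp
    next
      case 3
      then have "T = {p, q, s}" using assms(1) by (intro triple) auto
      then show ?thesis using assms(3) by simp
    qed
  qed
qed

lemma card_eq_5E: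
  assumes "card V = 5"
  obtains a b c d e where "V = {a, b, c, d, e}" and "distinct [a, b, c, d, e]"
proof -
  obtain a B where "V = insert a B" "a \<notin> B" "card B = 4"
    using card_eq_SucD[of V 4] assms by auto
  moreover obtain b C where "B = insert b C" "b \<notin> C" "card C = 3"
    using card_eq_SucD[of B 3] \<open>card B = 4\<close> by auto
  moreover obtain c d e where "C = {c, d, e}" "c \<noteq> d" "d \<noteq> e" "c \<noteq> e"
    using \<open>card C = 3\<close> card_3_iff by metis
  ultimately have "V = {a, b, c, d, e}" and "distinct [a, b, c, d, e]"
    by auto
  then show thesis
    by (rule that)
qed

lemma K4_if_every_vertex_deletion_has_triangle:
  assumes "symp E" and "card V = 5"
    and triangles: "\<forall>v\<in>V. \<exists>T\<subseteq>V - {v}. card T = 3 \<and> clique E T"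
  shows "\<exists>Q\<subseteq>V. card Q = 4 \<and> clique E Q"
proof -
  obtain a b c d e where V: "V = {a, b, c, d, e}" and distinct: "distinct [a, b, c, d, e]"
    using card_eq_5E[OF assms(2)] .
  then have deletions: "V - {a} = {b, c, d, e}" "V - {b} = {a, c, d, e}" "V - {c} = {a, b, d, e}"
      "V - {d} = {a, b, c, e}" "V - {e} = {a, b, c, d}"
    by auto
  have four: "clique E {p, q, r} \<or> clique E {p, q, s} \<or> clique E {p, r, s} \<or> clique E {q, r, s}"
    if "v \<in> V" and deletion: "V - {v} = {p, q, r, s}" for v p q r s
  proof -
    obtain T where "T \<subseteq> V - {v}" "card T = 3" "clique E T"
      using triangles \<open>v \<in> V\<close> by blast
    then show ?thesis
      unfolding deletion by (rule clique_triple_in_four)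
  qed
  have members: "a \<in> V" "b \<in> V" "c \<in> V" "d \<in> V" "e \<in> V"
    using V by simp_all
  note four[OF members(1) deletions(1)] four[OF members(2) deletions(2)]
    four[OF members(3) deletions(3)] four[OF members(4) deletions(4)]
    four[OF members(5) deletions(5)]
  then have "clique E {a, b, c, d} \<or> clique E {a, b, c, e} \<or> clique E {a, b, d, e}
      \<or> clique E {a, c, d, e} \<or> clique E {b, c, d, e}"
    using distinct by (simp add: clique_insert[OF assms(1)]) (smt (verit))
  then obtain Q where
      Q: "Q \<in> {{a, b, c, d}, {a, b, c, e}, {a, b, d, e}, {a, c, d, e}, {b, c, d, e}}"
      and "clique E Q"
    by blast
  moreover from Q have "Q \<subseteq> V" "card Q = 4"
    using V distinct by auto
  ultimately show ?thesis
    by blast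
qed

lemma larger_clique_if_every_vertex_deletion_has_clique:
  assumes "symp E" and "finite V" and "V \<noteq> {}" and "card V \<le> 5" and "3 \<le> m"
    and cliques: "\<forall>v\<in>V. \<exists>Q\<subseteq>V - {v}. card Q = m \<and> clique E Q"
  shows "\<exists>Q\<subseteq>V. card Q = Suc m \<and> clique E Q"
proof -
  obtain v0 where "v0 \<in> V"
    using assms(3) by blast
  then obtain Q0 where "Q0 \<subseteq> V - {v0}" "card Q0 = m"
    using cliques by blast
  then have "m \<le> card V - 1"
    using card_mono[of "V - {v0}" Q0] assms(2) \<open>v0 \<in> V\<close> by simp
  show ?thesis
  proof (cases "Suc m = card V")
    case True
    have deletion_cliques: "\<forall>v\<in>V. clique E (V - {v})"
    proof
      fix v assume "v \<in> V"
      obtain Q where "Q \<subseteq> V - {v}" "card Q = m" "clique E Q"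
        using cliques \<open>v \<in> V\<close> by blast
      moreover have "card (V - {v}) = m"
        using True \<open>v \<in> V\<close> assms(2) by simp
      ultimately have "Q = V - {v}"
        using card_subset_eq[of "V - {v}" Q] assms(2) by simp
      with \<open>clique E Q\<close> show "clique E (V - {v})" by simp
    qed
    have "3 \<le> card V"
      using True assms(5) by simp
    with deletion_cliques have "clique E V"
      by (intro clique_of_vertex_deletions[OF assms(2)])
    with True show ?thesis
      by (intro exI[of _ V]) simp
  next
    case False
    then have "card V = 5" "m = 3"
      using \<open>m \<le> card V - 1\<close> assms(4,5) by linarith+
    then show ?thesis
      using K4_if_every_vertex_deletion_has_triangle[OF assms(1) \<open>card V = 5\<close>] cliques by simp
  qed
qed

section \<open>Colourings\<close>

lemma proper_coloring_relabel:
  fixes c :: "'a \<Rightarrow> 'b"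
  assumes "finite S" and "\<forall>u\<in>S. \<forall>v\<in>S. E u v \<longrightarrow> c u \<noteq> c v"
  obtains c' where "proper_coloring S E c' (card (c ` S))"
    and "\<forall>u\<in>S. \<forall>v\<in>S. c' u = c' v \<longleftrightarrow> c u = c v"
proof -
  obtain h where h: "bij_betw h (c ` S) {0..<card (c ` S)}"
    using ex_bij_betw_finite_nat assms(1) by blast
  define c' where "c' v = Suc (h (c v))" for v
  have "c' ` S = Suc ` h ` c ` S"
    by (auto simp: c'_def image_image)
  also have "\<dots> = {1..card (c ` S)}"
    using h by (simp add: bij_betw_def atLeast0LessThan image_Suc_lessThan)
  finally have "c' ` S = {1..card (c ` S)}" .
  moreover have "\<forall>u\<in>S. \<forall>v\<in>S. c' u = c' v \<longleftrightarrow> c u = c v"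
    using h unfolding c'_def bij_betw_def inj_on_def by auto
  ultimately show thesis
    using that assms(2) unfolding proper_coloring_def by metis
qed

lemma proper_coloring_injective:
  assumes "finite S" and "irreflp E"
  obtains c where "proper_coloring S E c (card S)" and "inj_on c S"
proof -
  have "\<forall>u\<in>S. \<forall>v\<in>S. E u v \<longrightarrow> id u \<noteq> id v"
    using assms(2) by (auto dest: irreflpD)
  then obtain c where c: "proper_coloring S E c (card (id ` S))"
    and same_color: "\<forall>u\<in>S. \<forall>v\<in>S. c u = c v \<longleftrightarrow> id u = id v"
    by (rule proper_coloring_relabel[OF assms(1)])
  show thesis
  proof (rule that)
    show "proper_coloring S E c (card S)" using c by simp
    show "inj_on c S" using same_color by (auto intro: inj_onI)
  qed
qed

lemma clique_b_coloring:
  assumes "finite Q" and "irreflp E" and "clique E Q"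
  shows "\<exists>c. b_coloring Q E c (card Q)"
proof -
  obtain c where c: "proper_coloring Q E c (card Q)" and "inj_on c Q"
    using proper_coloring_injective[OF assms(1,2)] .
  have range: "c ` Q = {1..card Q}"
    using c by (simp add: proper_coloring_def)
  have "b_vertex Q E c (card Q) v" if "v \<in> Q" for v
    unfolding b_vertex_def
  proof (intro conjI ballI impI)
    fix j assume "j \<in> {1..card Q}" and "j \<noteq> c v"
    then obtain u where "u \<in> Q" "c u = j" "u \<noteq> v"
      using range by (metis imageE)
    moreover from this assms(3) \<open>v \<in> Q\<close> have "E v u"
      unfolding clique_def by metis
    ultimately show "\<exists>u\<in>Q. E v u \<and> c u = j"
      by blast
  qed (fact that)
  with c range show ?thesis
    unfolding b_coloring_def by (metis imageE)
qed

lemma proper_coloring_eliminate_class: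
  assumes "symp E" and "finite S" and c: "proper_coloring S E c k" and "i \<in> {1..k}"
    and no_b_vertex: "\<forall>v\<in>S. c v = i \<longrightarrow> \<not> b_vertex S E c k v"
  obtains c' k' where "proper_coloring S E c' k'" and "k' < k"
proof -
  have "\<exists>j. c v = i \<longrightarrow> j \<in> {1..k} \<and> j \<noteq> i \<and> (\<forall>u\<in>S. E v u \<longrightarrow> c u \<noteq> j)" if "v \<in> S" for v
    using no_b_vertex that unfolding b_vertex_def by blast
  then obtain J where J: "\<And>v. v \<in> S \<Longrightarrow> c v = i \<Longrightarrow>
      J v \<in> {1..k} \<and> J v \<noteq> i \<and> (\<forall>u\<in>S. E v u \<longrightarrow> c u \<noteq> J v)"
    by metis
  \<comment> \<open>Colour class i is independent, so its vertices can all move to colours missing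
     from their neighbourhoods at once.\<close>
  define c1 where "c1 v = (if c v = i then J v else c v)" for v
  have range: "c ` S = {1..k}" and proper: "\<forall>u\<in>S. \<forall>v\<in>S. E u v \<longrightarrow> c u \<noteq> c v"
    using c by (auto simp: proper_coloring_def)
  have "c1 ` S \<subseteq> {1..k} - {i}"
    using J range by (auto simp: c1_def)
  then have "card (c1 ` S) \<le> card ({1..k} - {i})"
    by (intro card_mono) auto
  then have "card (c1 ` S) < k"
    using \<open>i \<in> {1..k}\<close> by auto
  moreover have "\<forall>u\<in>S. \<forall>v\<in>S. E u v \<longrightarrow> c1 u \<noteq> c1 v"
  proof (intro ballI impI)
    fix u v assume "u \<in> S" "v \<in> S" "E u v"
    moreover have "E v u" using sympD[OF assms(1) \<open>E u v\<close>] .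
    ultimately show "c1 u \<noteq> c1 v"
      using J[of u] J[of v] proper unfolding c1_def by auto
  qed
  then obtain c' where "proper_coloring S E c' (card (c1 ` S))"
    by (rule proper_coloring_relabel[OF assms(2)])
  ultimately show thesis
    using that by blast
qed

lemma b_coloring_exists:
  assumes "finite S" and "symp E" and "irreflp E"
  shows "\<exists>k c. b_coloring S E c k"
proof -
  let ?colorable = "\<lambda>k. \<exists>c. proper_coloring S E c k"
  \<comment> \<open>A proper colouring with the fewest colours is a b-colouring.\<close>
  define k where "k = (LEAST k. ?colorable k)"
  have "?colorable (card S)"
    using proper_coloring_injective[OF assms(1,3)] by blast
  then have "?colorable k"
    unfolding k_def by (rule LeastI)
  then obtain c where c: "proper_coloring S E c k" ..
  have "b_coloring S E c k"
  proof (rule ccontr)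
    assume "\<not> b_coloring S E c k"
    then obtain i where "i \<in> {1..k}" "\<forall>v\<in>S. c v = i \<longrightarrow> \<not> b_vertex S E c k v"
      using c unfolding b_coloring_def by blast
    then obtain c' k' where "proper_coloring S E c' k'" "k' < k"
      using proper_coloring_eliminate_class[OF assms(2,1) c] by blast
    then show False
      unfolding k_def using not_less_Least by blast
  qed
  then show ?thesis by blast
qed

lemma b_coloring_le_card:
  assumes "b_coloring S E c k" and "finite S"
  shows "k \<le> card S"
proof -
  have "c ` S = {1..k}"
    using assms(1) by (simp add: b_coloring_def proper_coloring_def)
  then show ?thesis
    using card_image_le[OF assms(2), of c] by simp
qed

lemma
  assumes "finite S" and "symp E" and "irreflp E"
  shows b_coloring_b_chromatic: "\<exists>c. b_coloring S E c (b_chromatic S E)"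
    and b_coloring_le_b_chromatic: "b_coloring S E c k \<Longrightarrow> k \<le> b_chromatic S E"
proof -
  let ?K = "{k. \<exists>c. b_coloring S E c k}"
  have "?K \<subseteq> {..card S}"
    using b_coloring_le_card assms(1) by fastforce
  then have fin: "finite ?K"
    by (rule finite_subset) simp
  moreover have "?K \<noteq> {}"
    using b_coloring_exists[OF assms] by blast
  ultimately have "b_chromatic S E \<in> ?K"
    unfolding b_chromatic_def by (rule Max_in)
  then show "\<exists>c. b_coloring S E c (b_chromatic S E)"
    by simp
  show "b_coloring S E c k \<Longrightarrow> k \<le> b_chromatic S E"
    unfolding b_chromatic_def using fin by (simp add: Max_ge exI[of _ c])
qed

lemma b_coloring_b_vertices_clique:
  assumes "symp E" and bc: "b_coloring S E c k" and "finite S" and "card S \<le> k + 1"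
  shows "\<exists>Q\<subseteq>S. card Q = k \<and> clique E Q"
proof -
  obtain x where x: "\<And>i. i \<in> {1..k} \<Longrightarrow> x i \<in> S \<and> c (x i) = i \<and> b_vertex S E c k (x i)"
    using bc unfolding b_coloring_def by metis
  define Q where "Q = x ` {1..k}"
  have "inj_on x {1..k}"
    using x by (intro inj_onI) metis
  then have "card Q = k"
    by (simp add: Q_def card_image)
  have "Q \<subseteq> S"
    using x by (auto simp: Q_def)
  have unique_color: "u = x j" if "u \<in> Q" "c u = j" for u j
    using that x unfolding Q_def by auto
  \<comment> \<open>Non-adjacent b-vertices x i, x j would have neighbours of colours j and i outside Q,
     giving k + 2 vertices.\<close>
  have "E (x i) (x j)" if ij: "i \<in> {1..k}" "j \<in> {1..k}" "i \<noteq> j" for i j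
  proof (rule ccontr)
    assume nonadjacent: "\<not> E (x i) (x j)"
    obtain u where u: "u \<in> S" "E (x i) u" "c u = j"
      using x[OF ij(1)] ij unfolding b_vertex_def by metis
    obtain w where w: "w \<in> S" "E (x j) w" "c w = i"
      using x[OF ij(2)] ij unfolding b_vertex_def by metis
    have "u \<notin> Q"
      using unique_color[OF _ u(3)] u(2) nonadjacent by blast
    moreover have "w \<notin> Q"
      using unique_color[OF _ w(3)] w(2) nonadjacent sympD[OF assms(1)] by blast
    moreover have "u \<noteq> w"
      using u(3) w(3) ij(3) by blast
    ultimately have "card (insert u (insert w Q)) = k + 2"
      using \<open>card Q = k\<close> \<open>Q \<subseteq> S\<close> finite_subset[OF _ assms(3)] by simp
    moreover have "card (insert u (insert w Q)) \<le> card S"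
      using u(1) w(1) \<open>Q \<subseteq> S\<close> by (intro card_mono[OF assms(3)]) blast
    ultimately show False
      using assms(4) by linarith
  qed
  then have "clique E Q"
    unfolding clique_def Q_def by (metis (no_types, lifting) imageE)
  with \<open>Q \<subseteq> S\<close> \<open>card Q = k\<close> show ?thesis
    by blast
qed

section \<open>b-colourings of induced subgraphs\<close>

definition has_induced_b_coloring :: "'a set \<Rightarrow> ('a \<Rightarrow> 'a \<Rightarrow> bool) \<Rightarrow> nat \<Rightarrow> bool" where
  "has_induced_b_coloring V E k \<longleftrightarrow> (\<exists>S\<subseteq>V. \<exists>c. b_coloring S E c k)"

lemma has_induced_b_coloring_mono:
  "has_induced_b_coloring T E k \<Longrightarrow> T \<subseteq> V \<Longrightarrow> has_induced_b_coloring V E k"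
  unfolding has_induced_b_coloring_def by blast

lemma has_induced_b_coloring_clique:
  assumes "finite Q" and "irreflp E" and "clique E Q" and "Q \<subseteq> V" and "k \<le> card Q"
  shows "has_induced_b_coloring V E k"
proof -
  obtain R where "R \<subseteq> Q" "card R = k"
    using obtain_subset_with_card_n[OF assms(5)] by metis
  moreover have "finite R" and "clique E R"
    using \<open>R \<subseteq> Q\<close> assms(1,3) finite_subset clique_subset by blast+
  ultimately show ?thesis
    using clique_b_coloring[OF _ assms(2)] assms(4)
    unfolding has_induced_b_coloring_def by (metis order_trans)
qed

lemma
  assumes "finite V" and "symp E" and "irreflp E"
  shows has_induced_b_coloring_b_chromatic_r:
      "has_induced_b_coloring V E (b_chromatic_r V E)"
    and has_induced_b_coloring_le_b_chromatic_r:
      "has_induced_b_coloring V E k \<Longrightarrow> k \<le> b_chromatic_r V E"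
proof -
  let ?B = "{b_chromatic S E | S. S \<subseteq> V}"
  have "?B = (\<lambda>S. b_chromatic S E) ` Pow V"
    by auto
  then have fin: "finite ?B"
    using assms(1) by simp
  have "b_chromatic_r V E \<in> ?B"
    unfolding b_chromatic_r_def using Max_in[OF fin] by blast
  then obtain S where "S \<subseteq> V" "b_chromatic_r V E = b_chromatic S E"
    by blast
  then show "has_induced_b_coloring V E (b_chromatic_r V E)"
    unfolding has_induced_b_coloring_def
    using b_coloring_b_chromatic[OF finite_subset[OF _ assms(1)] assms(2,3)] by metis
  assume "has_induced_b_coloring V E k"
  then obtain T c where T: "T \<subseteq> V" "b_coloring T E c k"
    unfolding has_induced_b_coloring_def by blast
  then have "k \<le> b_chromatic T E"
    using b_coloring_le_b_chromatic[OF finite_subset[OF _ assms(1)] assms(2,3)] by blast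
  also have "\<dots> \<le> b_chromatic_r V E"
    unfolding b_chromatic_r_def using Max_ge[OF fin] T(1) by blast
  finally show "k \<le> b_chromatic_r V E" .
qed

lemma b_chromatic_r_subset_eq_iff:
  assumes "finite V" and "symp E" and "irreflp E" and "T \<subseteq> V"
  shows "b_chromatic_r T E = b_chromatic_r V E \<longleftrightarrow>
    has_induced_b_coloring T E (b_chromatic_r V E)"
proof -
  have "finite T"
    using assms(1,4) by (rule finite_subset[rotated])
  show ?thesis
  proof
    assume "b_chromatic_r T E = b_chromatic_r V E"
    then show "has_induced_b_coloring T E (b_chromatic_r V E)"
      using has_induced_b_coloring_b_chromatic_r[OF \<open>finite T\<close> assms(2,3)] by simp
  next
    assume "has_induced_b_coloring T E (b_chromatic_r V E)"
    moreover have "b_chromatic_r T E \<le> b_chromatic_r V E"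
      using has_induced_b_coloring_b_chromatic_r[OF \<open>finite T\<close> assms(2,3)]
        has_induced_b_coloring_mono[OF _ assms(4)]
        has_induced_b_coloring_le_b_chromatic_r[OF assms(1-3)] by blast
    ultimately show "b_chromatic_r T E = b_chromatic_r V E"
      using has_induced_b_coloring_le_b_chromatic_r[OF \<open>finite T\<close> assms(2,3)] by (simp add: le_antisym)
  qed
qed

lemma has_induced_b_coloring_three:
  assumes "graph V E" and "card V \<le> 5" and "3 \<le> k" and "has_induced_b_coloring V E k"
  shows "has_induced_b_coloring V E 3"
proof (cases "k = 3")
  case False
  obtain S c where "S \<subseteq> V" and c: "b_coloring S E c k"
    using assms(4) unfolding has_induced_b_coloring_def by blast
  have "finite S"
    using \<open>S \<subseteq> V\<close> graphD(1)[OF assms(1)] by (rule finite_subset)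
  moreover have "card S \<le> k + 1"
    using card_mono[OF graphD(1)[OF assms(1)] \<open>S \<subseteq> V\<close>] assms(2,3) False by linarith
  ultimately obtain Q where "Q \<subseteq> S" "card Q = k" "clique E Q"
    using b_coloring_b_vertices_clique[OF graphD(2)[OF assms(1)] c] by blast
  moreover have "finite Q"
    using \<open>Q \<subseteq> S\<close> \<open>finite S\<close> by (rule finite_subset)
  moreover have "Q \<subseteq> V"
    using \<open>Q \<subseteq> S\<close> \<open>S \<subseteq> V\<close> by (rule order_trans)
  ultimately show ?thesis
    using has_induced_b_coloring_clique[OF _ graphD(3)[OF assms(1)]] assms(3) by simp
qed (use assms(4) in simp)

lemma b_chromatic_r_vertex_deletion_drops:
  assumes "graph V E" and "V \<noteq> {}" and "card V \<le> 5" and "3 \<le> b_chromatic_r V E"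
  shows "\<exists>v\<in>V. \<not> has_induced_b_coloring (V - {v}) E (b_chromatic_r V E)"
proof (rule ccontr)
  let ?m = "b_chromatic_r V E"
  note fin = graphD(1)[OF assms(1)] and sym = graphD(2)[OF assms(1)]
    and irr = graphD(3)[OF assms(1)]
  assume "\<not> ?thesis"
  then have colorable: "has_induced_b_coloring (V - {v}) E ?m" if "v \<in> V" for v
    using that by blast
  have "\<exists>Q\<subseteq>V - {v}. card Q = ?m \<and> clique E Q" if v: "v \<in> V" for v
  proof -
    obtain S c where S: "S \<subseteq> V - {v}" and c: "b_coloring S E c ?m"
      using colorable[OF v] unfolding has_induced_b_coloring_def by blast
    have "finite (V - {v})"
      using fin by simp
    then have "finite S" and "card S \<le> card (V - {v})"
      using S by (simp_all add: finite_subset card_mono)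
    moreover have "card (V - {v}) \<le> ?m + 1"
      using fin v assms(3,4) by simp
    ultimately obtain Q where "Q \<subseteq> S" "card Q = ?m" "clique E Q"
      using b_coloring_b_vertices_clique[OF sym c] by (metis le_trans)
    with S show ?thesis
      by (intro exI[of _ Q]) simp
  qed
  then obtain Q where "Q \<subseteq> V" "card Q = Suc ?m" "clique E Q"
    using larger_clique_if_every_vertex_deletion_has_clique[OF sym fin assms(2,3,4)] by blast
  moreover have "finite Q"
    using \<open>Q \<subseteq> V\<close> fin by (rule finite_subset)
  ultimately have "has_induced_b_coloring V E (Suc ?m)"
    using has_induced_b_coloring_clique[OF _ irr] by simp
  then show False
    using has_induced_b_coloring_le_b_chromatic_r[OF fin sym irr] by (metis Suc_n_not_le_n)
qed

section \<open>b-atoms\<close>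

lemma b_atom_imp_b_coloring:
  assumes "b_atom S E t"
  shows "\<exists>c. b_coloring S E c t"
proof -
  obtain D :: "nat \<Rightarrow> _" and center where
    cover: "(\<Union>i\<in>{1..t}. D i) = S" and
    disjoint: "\<forall>i\<in>{1..t}. \<forall>j\<in>{1..t}. i \<noteq> j \<longrightarrow> D i \<inter> D j = {}" and
    parts: "\<forall>i\<in>{1..t}. center i \<in> D i \<and> independent E (D i) \<and> card (D i) \<le> t" and
    adjacent: "\<forall>i\<in>{1..t}. \<forall>j\<in>{1..t}. i \<noteq> j \<longrightarrow> (\<exists>u\<in>D j. E (center i) u)"
    using assms unfolding b_atom_def by blast
  define c where "c v = (THE i. i \<in> {1..t} \<and> v \<in> D i)" for v
  have color: "c v = i" if "i \<in> {1..t}" "v \<in> D i" for v i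
    unfolding c_def using that disjoint by (intro the_equality) blast+
  have part_of: "\<exists>i\<in>{1..t}. v \<in> D i" if "v \<in> S" for v
    using that cover by blast
  have center: "center i \<in> S" "c (center i) = i" if "i \<in> {1..t}" for i
    using that parts cover color by blast+
  have range: "c ` S = {1..t}"
    using part_of color center by (force simp: image_iff)
  have proper: "c u \<noteq> c v" if "u \<in> S" "v \<in> S" "E u v" for u v
  proof
    assume "c u = c v"
    obtain i j where "i \<in> {1..t}" "u \<in> D i" "j \<in> {1..t}" "v \<in> D j"
      using part_of \<open>u \<in> S\<close> \<open>v \<in> S\<close> by blast
    with \<open>c u = c v\<close> color have "v \<in> D i" by metis
    with \<open>i \<in> {1..t}\<close> \<open>u \<in> D i\<close> \<open>E u v\<close> parts show False
      unfolding independent_def by blast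
  qed
  have "b_vertex S E c t (center i)" if "i \<in> {1..t}" for i
    unfolding b_vertex_def
  proof (intro conjI ballI impI)
    fix j assume "j \<in> {1..t}" "j \<noteq> c (center i)"
    with adjacent that center obtain u where "u \<in> D j" "E (center i) u"
      by metis
    with \<open>j \<in> {1..t}\<close> color cover show "\<exists>u\<in>S. E (center i) u \<and> c u = j"
      by blast
  qed (use center that in blast)
  with range proper center show ?thesis
    unfolding b_coloring_def proper_coloring_def by metis
qed

lemma b_coloring_imp_b_atom:
  assumes bc: "b_coloring S E c t" and "finite S" and "card S + 1 \<le> 2 * t"
  shows "b_atom S E t"
proof -
  obtain x where x: "\<And>i. i \<in> {1..t} \<Longrightarrow> x i \<in> S \<and> c (x i) = i \<and> b_vertex S E c t (x i)"
    using bc unfolding b_coloring_def by metis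
  have range: "c ` S = {1..t}" and proper: "\<forall>u\<in>S. \<forall>v\<in>S. E u v \<longrightarrow> c u \<noteq> c v"
    using bc unfolding b_coloring_def proper_coloring_def by blast+
  define D where "D i = {v \<in> S. c v = i}" for i
  have "card (D i) \<le> t" if "i \<in> {1..t}" for i
  proof -
    let ?others = "x ` ({1..t} - {i})"
    have "inj_on x ({1..t} - {i})"
      using x by (intro inj_onI) (metis DiffD1)
    then have "card ?others = t - 1"
      using that by (simp add: card_image)
    have "D i \<inter> ?others = {}" and "D i \<union> ?others \<subseteq> S"
      using x unfolding D_def by auto
    moreover have "finite (D i)" and "finite ?others"
      by (simp_all add: D_def \<open>finite S\<close>)
    ultimately have "card (D i) + card ?others \<le> card S"
      using card_mono[OF \<open>finite S\<close>] by (metis card_Un_disjoint)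
    with \<open>card ?others = t - 1\<close> assms(3) show ?thesis
      by linarith
  qed
  moreover have "\<exists>u\<in>D j. E (x i) u" if "i \<in> {1..t}" "j \<in> {1..t}" "i \<noteq> j" for i j
    using that x[of i] unfolding b_vertex_def D_def by fastforce
  moreover have "(\<Union>i\<in>{1..t}. D i) = S"
    using range unfolding D_def by blast
  moreover have "independent E (D i)" for i
    using proper unfolding independent_def D_def by blast
  moreover have "x i \<in> D i" if "i \<in> {1..t}" for i
    using x[OF that] by (simp add: D_def)
  ultimately show ?thesis
    unfolding b_atom_def
    by (intro exI[of _ D] exI[of _ x]) (auto simp: D_def)
qed

lemma minimal_b_atom_exists:
  assumes "finite S" and "b_atom S E t"
  shows "\<exists>S'\<subseteq>S. minimal_b_atom S' E t"
  using assms
proof (induction S rule: finite_psubset_induct)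
  case (psubset S)
  show ?case
  proof (cases "minimal_b_atom S E t")
    case False
    then obtain S' where "S' \<subset> S" "b_atom S' E t"
      using psubset.prems unfolding minimal_b_atom_def by blast
    then obtain S'' where "S'' \<subseteq> S'" "minimal_b_atom S'' E t"
      using psubset.IH by blast
    with \<open>S' \<subset> S\<close> show ?thesis
      by (intro exI[of _ S'']) auto
  qed (intro exI[of _ S], simp)
qed

lemma minimal_b_atom_iff_has_induced_b_coloring:
  assumes "finite V" and "card V + 1 \<le> 2 * t"
  shows "(\<exists>S\<subseteq>V. minimal_b_atom S E t) \<longleftrightarrow> has_induced_b_coloring V E t"
proof
  assume "\<exists>S\<subseteq>V. minimal_b_atom S E t"
  then obtain S where "S \<subseteq> V" "b_atom S E t"
    unfolding minimal_b_atom_def by blast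
  moreover from \<open>b_atom S E t\<close> obtain c where "b_coloring S E c t"
    using b_atom_imp_b_coloring by blast
  ultimately show "has_induced_b_coloring V E t"
    unfolding has_induced_b_coloring_def by blast
next
  assume "has_induced_b_coloring V E t"
  then obtain S c where "S \<subseteq> V" and c: "b_coloring S E c t"
    unfolding has_induced_b_coloring_def by blast
  have "finite S"
    using \<open>S \<subseteq> V\<close> assms(1) by (rule finite_subset)
  have "card S \<le> card V"
    using assms(1) \<open>S \<subseteq> V\<close> by (rule card_mono)
  then have "b_atom S E t"
    using assms(2) by (intro b_coloring_imp_b_atom[OF c \<open>finite S\<close>]) linarith
  then obtain S' where "S' \<subseteq> S" "minimal_b_atom S' E t"
    using minimal_b_atom_exists[OF \<open>finite S\<close>] by blast
  with \<open>S \<subseteq> V\<close> show "\<exists>S\<subseteq>V. minimal_b_atom S E t"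
    by blast
qed

section \<open>Vertex deletions\<close>

lemma has_induced_b_coloring_two_iff:
  assumes "finite V" and "symp E" and "irreflp E"
  shows "has_induced_b_coloring V E 2 \<longleftrightarrow> (\<exists>x\<in>V. \<exists>y\<in>V. E x y)"
proof
  assume "has_induced_b_coloring V E 2"
  then obtain S c where "S \<subseteq> V" and c: "b_coloring S E c 2"
    unfolding has_induced_b_coloring_def by blast
  have "(1::nat) \<in> {1..2}" "(2::nat) \<in> {1..2}"
    by simp_all
  then obtain v where "v \<in> S" "c v = 1" "b_vertex S E c 2 v"
    using c unfolding b_coloring_def by blast
  moreover have "(2::nat) \<noteq> c v"
    using \<open>c v = 1\<close> by simp
  ultimately obtain u where "u \<in> S" "E v u"
    using \<open>(2::nat) \<in> {1..2}\<close> unfolding b_vertex_def by blast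
  with \<open>v \<in> S\<close> \<open>S \<subseteq> V\<close> show "\<exists>x\<in>V. \<exists>y\<in>V. E x y"
    by blast
next
  assume "\<exists>x\<in>V. \<exists>y\<in>V. E x y"
  then obtain x y where "x \<in> V" "y \<in> V" "E x y"
    by blast
  moreover have "x \<noteq> y"
    using \<open>E x y\<close> irreflpD[OF assms(3)] by metis
  moreover have "clique E {x, y}"
    using \<open>E x y\<close> sympD[OF assms(2)] unfolding clique_def by auto
  ultimately show "has_induced_b_coloring V E 2"
    using has_induced_b_coloring_clique[of "{x, y}" E V 2] assms(3) by simp
qed

lemma triangle_free_if_no_induced_b_coloring_three:
  assumes "graph V E" and "\<not> has_induced_b_coloring V E 3" and "E x y" and "E y z"
  shows "\<not> E x z"
proof
  assume "E x z"
  have sym: "E a b \<Longrightarrow> E b a" for a b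
    using sympD[OF graphD(2)[OF assms(1)]] .
  have irr: "\<not> E a a" for a
    using irreflpD[OF graphD(3)[OF assms(1)]] .
  have "x \<noteq> y" "y \<noteq> z" "x \<noteq> z"
    using assms(3,4) \<open>E x z\<close> irr by metis+
  then have "card {x, y, z} = 3"
    by simp
  moreover have "clique E {x, y, z}"
    using assms(3,4) \<open>E x z\<close> sym unfolding clique_def by auto
  moreover have "{x, y, z} \<subseteq> V"
    using assms(3,4) graphD(4)[OF assms(1)] by auto
  ultimately have "has_induced_b_coloring V E 3"
    using has_induced_b_coloring_clique[of "{x, y, z}" E V 3] graphD(3)[OF assms(1)] by simp
  with assms(2) show False ..
qed

lemma disjoint_edges_if_edge_avoiding_every_vertex:
  assumes "graph V E" and "E u w"
    and triangle_free: "\<And>x y z. E x y \<Longrightarrow> E y z \<Longrightarrow> \<not> E x z"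
    and avoiding: "\<forall>v\<in>V. \<exists>x\<in>V - {v}. \<exists>y\<in>V - {v}. E x y"
  shows "\<exists>a b x y. E a b \<and> E x y \<and> {a, b} \<inter> {x, y} = {}"
proof (rule ccontr)
  assume no_disjoint: "\<not> ?thesis"
  have sym: "E a b \<Longrightarrow> E b a" for a b
    using sympD[OF graphD(2)[OF assms(1)]] .
  have other_neighbour: "\<exists>z. E s z \<and> z \<noteq> r" if "E r s" for r s
  proof -
    obtain x y where "x \<in> V - {r}" "y \<in> V - {r}" "E x y"
      using avoiding graphD(4)[OF assms(1) \<open>E r s\<close>] by blast
    then have "x \<noteq> r" "y \<noteq> r"
      by simp_all
    with no_disjoint \<open>E r s\<close> \<open>E x y\<close> have "x = s \<or> y = s"
      by auto
    with \<open>x \<noteq> r\<close> \<open>y \<noteq> r\<close> \<open>E x y\<close> sym show ?thesis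
      by auto
  qed
  obtain y' where "E w y'" "y' \<noteq> u"
    using other_neighbour[OF assms(2)] by blast
  obtain q' where "E u q'" "q' \<noteq> w"
    using other_neighbour[OF sym[OF assms(2)]] by blast
  have "u \<noteq> w"
    using assms(2) irreflpD[OF graphD(3)[OF assms(1)]] by metis
  moreover have "y' \<noteq> q'"
    using triangle_free[OF assms(2) \<open>E w y'\<close>] \<open>E u q'\<close> by blast
  ultimately have "{w, y'} \<inter> {u, q'} = {}"
    using \<open>y' \<noteq> u\<close> \<open>q' \<noteq> w\<close> by auto
  with \<open>E w y'\<close> \<open>E u q'\<close> no_disjoint show False
    by blast
qed

lemma edge_avoiding_every_vertex_iff_disjoint_edges:
  assumes "graph V E" and "E u w"
    and triangle_free: "\<And>x y z. E x y \<Longrightarrow> E y z \<Longrightarrow> \<not> E x z"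
  shows "(\<forall>v\<in>V. \<exists>x\<in>V - {v}. \<exists>y\<in>V - {v}. E x y) \<longleftrightarrow>
    (\<exists>a b x y. E a b \<and> E x y \<and> {a, b} \<inter> {x, y} = {})"
proof
  assume "\<exists>a b x y. E a b \<and> E x y \<and> {a, b} \<inter> {x, y} = {}"
  then obtain a b x y where edges: "E a b" "E x y" and disjoint: "{a, b} \<inter> {x, y} = {}"
    by blast
  show "\<forall>v\<in>V. \<exists>x\<in>V - {v}. \<exists>y\<in>V - {v}. E x y"
  proof
    fix v
    have "v \<notin> {a, b} \<or> v \<notin> {x, y}"
      using disjoint by blast
    then show "\<exists>x\<in>V - {v}. \<exists>y\<in>V - {v}. E x y"
    proof
      assume "v \<notin> {a, b}"
      with edges(1) graphD(4)[OF assms(1)] show ?thesis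
        by (intro bexI[of _ a] bexI[of _ b]) auto
    next
      assume "v \<notin> {x, y}"
      with edges(2) graphD(4)[OF assms(1)] show ?thesis
        by (intro bexI[of _ x] bexI[of _ y]) auto
    qed
  qed
qed (rule disjoint_edges_if_edge_avoiding_every_vertex[OF assms])

lemma b_chromatic_r_vertex_deletions_iff:
  assumes "graph V E" and "V \<noteq> {}" and "card V \<le> 5" and "E u w"
  shows "(\<forall>v\<in>V. b_chromatic_r (V - {v}) E = b_chromatic_r V E) \<longleftrightarrow>
    (\<exists>a b x y. E a b \<and> E x y \<and> {a, b} \<inter> {x, y} = {}) \<and> \<not> has_induced_b_coloring V E 3"
proof -
  note fin = graphD(1)[OF assms(1)] and sym = graphD(2)[OF assms(1)]
    and irr = graphD(3)[OF assms(1)]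
  define m where "m = b_chromatic_r V E"
  have deletions: "(\<forall>v\<in>V. b_chromatic_r (V - {v}) E = m) \<longleftrightarrow>
      (\<forall>v\<in>V. has_induced_b_coloring (V - {v}) E m)"
    using b_chromatic_r_subset_eq_iff[OF fin sym irr] unfolding m_def by blast
  have m_bound: "has_induced_b_coloring V E k \<Longrightarrow> k \<le> m" for k
    using has_induced_b_coloring_le_b_chromatic_r[OF fin sym irr] unfolding m_def .
  show ?thesis
  proof (cases "3 \<le> m")
    case True
    have "has_induced_b_coloring V E 3"
      using has_induced_b_coloring_three[OF assms(1,3) True]
        has_induced_b_coloring_b_chromatic_r[OF fin sym irr] unfolding m_def by blast
    moreover have "\<exists>v\<in>V. \<not> has_induced_b_coloring (V - {v}) E m"
      using b_chromatic_r_vertex_deletion_drops[OF assms(1-3)] True unfolding m_def by blast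
    ultimately show ?thesis
      using deletions unfolding m_def by blast
  next
    case False
    then have no_three: "\<not> has_induced_b_coloring V E 3"
      using m_bound by fastforce
    have "has_induced_b_coloring V E 2"
      using has_induced_b_coloring_two_iff[OF fin sym irr] graphD(4)[OF assms(1,4)] assms(4) by blast
    with False have "m = 2"
      using m_bound by fastforce
    have two: "has_induced_b_coloring (V - {v}) E 2 \<longleftrightarrow> (\<exists>x\<in>V - {v}. \<exists>y\<in>V - {v}. E x y)"
      for v using has_induced_b_coloring_two_iff[OF _ sym irr] fin by simp
    have "\<And>x y z. E x y \<Longrightarrow> E y z \<Longrightarrow> \<not> E x z"
      using triangle_free_if_no_induced_b_coloring_three[OF assms(1) no_three] .
    then have "(\<forall>v\<in>V. has_induced_b_coloring (V - {v}) E m) \<longleftrightarrow>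
        (\<exists>a b x y. E a b \<and> E x y \<and> {a, b} \<inter> {x, y} = {})"
      unfolding \<open>m = 2\<close> two by (rule edge_avoiding_every_vertex_iff_disjoint_edges[OF assms(1,4)])
    with deletions no_three show ?thesis
      unfolding m_def by blast
  qed
qed

theorem mainTheorem13:
  fixes V :: "'a set" and E :: "'a \<Rightarrow> 'a \<Rightarrow> bool"
  assumes "graph V E"
    and "4 \<le> card V" and "card V \<le> 5"
    and "\<exists>u v. E u v"
  shows "(\<forall>v\<in>V. b_chromatic_r (V - {v}) E = b_chromatic_r V E + card V div 2 - 2)
     \<longleftrightarrow> ((\<exists>a b x y. E a b \<and> E x y \<and> {a, b} \<inter> {x, y} = {})
          \<and> \<not> (\<exists>S. S \<subseteq> V \<and> minimal_b_atom S E 3))"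
proof -
  obtain u w where "E u w"
    using assms(4) by blast
  have "card V div 2 = 2"
    using assms(2,3) by presburger
  moreover have "V \<noteq> {}"
    using assms(2) by auto
  moreover have "(\<exists>S. S \<subseteq> V \<and> minimal_b_atom S E 3) \<longleftrightarrow> has_induced_b_coloring V E 3"
    using minimal_b_atom_iff_has_induced_b_coloring[OF graphD(1)[OF assms(1)]] assms(3) by simp
  ultimately show ?thesis
    using b_chromatic_r_vertex_deletions_iff[OF assms(1) _ assms(3) \<open>E u w\<close>] by simp
qed

end
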